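(* Let $q,w$ be real-valued functions with $q,w\in L^1[-1,1]$, $w(x)\neq0$ for a.e. $x\in[-1,1]$, $w$ changing sign on $[-1,1]$, and assume moreover $w$ is absolutely continuous on $[-1,1]$ with $w'\in L^2[-1,1]$. Let $\varepsilon_2>0$ be such that $8\|q_-\|_1^2\, m_2(\varepsilon_2)<1$. If $\lambda\in\mathbb{C}\setminus\mathbb{R}$ is an eigenvalue of the problem $-y''+qy=\lambda wy$, $y(-1)=y(1)=0$, then $$|\operatorname{Re}\lambda|\le \frac{8}{\varepsilon_2}\|q_-\|_1^2\big(3\|w\|_C+\|w'\|_2\big),\qquad |\operatorname{Im}\lambda|\le \frac{8}{\varepsilon_2}\|w'\|_2\|q_-\|_1^2 .$$
   Context: $\|\cdot\|_p$ denotes the norm of $L^p[-1,1]$ (Lebesgue measure) and $\|\cdot\|_C$ the maximum norm on $C[-1,1]$. $q_-(x)=-\min\{0,q(x)\}$. For $\varepsilon>0$, $S_2(\varepsilon)=\{x\in[-1,1]: w(x)^2<\varepsilon\}$ and $m_2(\varepsilon)$ is the Lebesgue measure of $S_2(\varepsilon)$. A number $\lambda\in\mathbb{C}$ is an eigenvalue of $-y''+qy=\lambda wy$, $y(-1)=y(1)=0$, if there is a nontrivial function $y$ with $y,y'$ absolutely continuous on $[-1,1]$ satisfying $-y''+qy=\lambda wy$ a.e. on $[-1,1]$ and $y(-1)=y(1)=0$. *)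

theory Defs
  imports "HOL-Analysis.Analysis"
begin

definition abs_continuous_on :: "real \<Rightarrow> real \<Rightarrow> (real \<Rightarrow> 'b::real_normed_vector) \<Rightarrow> bool" where
  "abs_continuous_on c d f \<longleftrightarrow>
     (\<forall>\<epsilon>>0. \<exists>\<delta>>0. \<forall>(n::nat) (a::nat \<Rightarrow> real) (b::nat \<Rightarrow> real).
        (\<forall>i<n. c \<le> a i \<and> a i \<le> b i \<and> b i \<le> d) \<and>
        (\<forall>i<n. \<forall>j<n. i \<noteq> j \<longrightarrow> b i \<le> a j \<or> b j \<le> a i) \<and>
        (\<Sum>i<n. b i - a i) < \<delta>
        \<longrightarrow> (\<Sum>i<n. norm (f (b i) - f (a i))) < \<epsilon>)"

text \<open>\<lambda> is an eigenvalue of  -y'' + q y = \<lambda> w y,  y(-1) = y(1) = 0.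
  Here y1 is y' (the derivative of y on [-1,1]); y'' is the a.e. derivative of y'.\<close>
definition is_eigenvalue :: "(real \<Rightarrow> real) \<Rightarrow> (real \<Rightarrow> real) \<Rightarrow> complex \<Rightarrow> bool" where
  "is_eigenvalue q w lam \<longleftrightarrow>
     (\<exists>y y1 :: real \<Rightarrow> complex.
        (\<exists>x\<in>{-1..1}. y x \<noteq> 0) \<and>
        abs_continuous_on (-1) 1 y \<and> abs_continuous_on (-1) 1 y1 \<and>
        (\<forall>x\<in>{-1..1}. (y has_vector_derivative y1 x) (at x within {-1..1})) \<and>
        (AE x in lebesgue. x \<in> {-1..1} \<longrightarrow>
           (\<exists>d. (y1 has_vector_derivative d) (at x) \<and>
                - d + complex_of_real (q x) * y x = lam * complex_of_real (w x) * y x)) \<and>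
        y (-1) = 0 \<and> y 1 = 0)"

end

theory Submission
  imports Defs
begin

hide_const (open) Polynomial.content

definition nonoverlapping_intervals :: "real \<Rightarrow> real \<Rightarrow> nat \<Rightarrow> (nat \<Rightarrow> real) \<Rightarrow> (nat \<Rightarrow> real) \<Rightarrow> bool"
  where "nonoverlapping_intervals a b n u v \<longleftrightarrow>
    (\<forall>i<n. a \<le> u i \<and> u i \<le> v i \<and> v i \<le> b) \<and> (\<forall>i<n. \<forall>j<n. i \<noteq> j \<longrightarrow> v i \<le> u j \<or> v j \<le> u i)"

lemma abs_continuous_on_iff:
  "abs_continuous_on a b f \<longleftrightarrow> (\<forall>e>0. \<exists>d>0. \<forall>n u v. nonoverlapping_intervals a b n u v \<longrightarrow>
     (\<Sum>i<n. v i - u i) < d \<longrightarrow> (\<Sum>i<n. norm (f (v i) - f (u i))) < e)"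
  unfolding abs_continuous_on_def nonoverlapping_intervals_def by (simp add: imp_conjL)

lemma abs_continuous_onD:
  assumes "abs_continuous_on a b f" and "e > 0"
  obtains d where "d > 0"
    and "\<And>n u v. nonoverlapping_intervals a b n u v \<Longrightarrow> (\<Sum>i<n. v i - u i) < d \<Longrightarrow>
           (\<Sum>i<n. norm (f (v i) - f (u i))) < e"
  using assms unfolding abs_continuous_on_iff by blast

lemma abs_continuous_on_imp_continuous_on:
  assumes "abs_continuous_on a b f"
  shows "continuous_on {a..b} f"
  unfolding continuous_on_iff
proof (intro ballI allI impI)
  fix x e :: real assume x: "x \<in> {a..b}" and "e > 0"
  obtain d where "d > 0"
    and d: "\<And>n u v. nonoverlapping_intervals a b n u v \<Longrightarrow> (\<Sum>i<n. v i - u i) < d \<Longrightarrow>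
           (\<Sum>i<n. norm (f (v i) - f (u i))) < e"
    by (rule abs_continuous_onD[OF assms \<open>e > 0\<close>]) (rule that)
  have "dist (f x') (f x) < e" if x': "x' \<in> {a..b}" and "dist x' x < d" for x'
  proof -
    have "nonoverlapping_intervals a b 1 (\<lambda>_. min x x') (\<lambda>_. max x x')"
      using x x' by (auto simp: nonoverlapping_intervals_def)
    moreover have "max x x' - min x x' < d"
      using \<open>dist x' x < d\<close> by (auto simp: dist_real_def max_def min_def)
    ultimately have "norm (f (max x x') - f (min x x')) < e"
      using d[of 1 "\<lambda>_. min x x'" "\<lambda>_. max x x'"] by simp
    then show ?thesis
      by (cases "x \<le> x'") (simp_all add: dist_norm norm_minus_commute)
  qed
  with \<open>d > 0\<close> show "\<exists>d>0. \<forall>x'\<in>{a..b}. dist x' x < d \<longrightarrow> dist (f x') (f x) < e"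
    by blast
qed

lemma abs_continuous_on_const: "abs_continuous_on a b (\<lambda>_. c)"
  unfolding abs_continuous_on_def by auto

lemma abs_continuous_on_cnj:
  "abs_continuous_on a b f \<Longrightarrow> abs_continuous_on a b (\<lambda>x. cnj (f x))"
  unfolding abs_continuous_on_def by (simp flip: complex_cnj_diff)

lemma abs_continuous_on_of_real:
  "abs_continuous_on a b f \<Longrightarrow> abs_continuous_on a b (\<lambda>x. of_real (f x) :: 'a::real_normed_algebra_1)"
  unfolding abs_continuous_on_def by (simp flip: of_real_diff)

lemma abs_continuous_on_mult:
  fixes f g :: "real \<Rightarrow> 'a::real_normed_algebra"
  assumes f: "abs_continuous_on a b f" and g: "abs_continuous_on a b g"
  shows "abs_continuous_on a b (\<lambda>x. f x * g x)"
proof -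
  have "bounded (f ` {a..b} \<union> g ` {a..b})"
    using f g by (intro compact_imp_bounded compact_Un compact_continuous_image
        abs_continuous_on_imp_continuous_on) auto
  then obtain M where "M > 0" and "\<forall>z \<in> f ` {a..b} \<union> g ` {a..b}. norm z \<le> M"
    unfolding bounded_pos by blast
  then have M: "norm (f x) \<le> M" "norm (g x) \<le> M" if "x \<in> {a..b}" for x
    using that by blast+
  show ?thesis
    unfolding abs_continuous_on_iff
  proof (intro allI impI)
    fix e :: real assume "e > 0"
    then have e': "e / (2 * M) > 0" using \<open>M > 0\<close> by simp
    obtain d1 where "d1 > 0"
      and d1: "\<And>n u v. nonoverlapping_intervals a b n u v \<Longrightarrow> (\<Sum>i<n. v i - u i) < d1 \<Longrightarrow>
           (\<Sum>i<n. norm (f (v i) - f (u i))) < e / (2 * M)"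
      by (rule abs_continuous_onD[OF f e']) (rule that)
    obtain d2 where "d2 > 0"
      and d2: "\<And>n u v. nonoverlapping_intervals a b n u v \<Longrightarrow> (\<Sum>i<n. v i - u i) < d2 \<Longrightarrow>
           (\<Sum>i<n. norm (g (v i) - g (u i))) < e / (2 * M)"
      by (rule abs_continuous_onD[OF g e']) (rule that)
    have "(\<Sum>i<n. norm (f (v i) * g (v i) - f (u i) * g (u i))) < e"
      if uv: "nonoverlapping_intervals a b n u v" and small: "(\<Sum>i<n. v i - u i) < min d1 d2" for n u v
    proof -
      have "norm (f (v i) * g (v i) - f (u i) * g (u i))
          \<le> M * norm (g (v i) - g (u i)) + M * norm (f (v i) - f (u i))" if "i < n" for i
      proof -
        have "u i \<in> {a..b}" "v i \<in> {a..b}"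
          using uv \<open>i < n\<close> by (auto simp: nonoverlapping_intervals_def)
        have "norm (f (v i) * g (v i) - f (u i) * g (u i))
            = norm (f (v i) * (g (v i) - g (u i)) + (f (v i) - f (u i)) * g (u i))"
          by (simp add: algebra_simps)
        also have "\<dots> \<le> norm (f (v i)) * norm (g (v i) - g (u i)) + norm (f (v i) - f (u i)) * norm (g (u i))"
          by (rule order_trans[OF norm_triangle_ineq add_mono[OF norm_mult_ineq norm_mult_ineq]])
        also have "\<dots> \<le> M * norm (g (v i) - g (u i)) + norm (f (v i) - f (u i)) * M"
          using M \<open>u i \<in> {a..b}\<close> \<open>v i \<in> {a..b}\<close> by (intro add_mono mult_right_mono mult_left_mono) auto
        finally show ?thesis by (simp add: mult.commute)
      qed
      then have "(\<Sum>i<n. norm (f (v i) * g (v i) - f (u i) * g (u i)))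
          \<le> (\<Sum>i<n. M * norm (g (v i) - g (u i)) + M * norm (f (v i) - f (u i)))"
        by (intro sum_mono) simp
      also have "\<dots> = M * (\<Sum>i<n. norm (g (v i) - g (u i))) + M * (\<Sum>i<n. norm (f (v i) - f (u i)))"
        by (simp add: sum.distrib sum_distrib_left)
      also have "\<dots> < M * (e / (2 * M)) + M * (e / (2 * M))"
        using d1[OF uv] d2[OF uv] small \<open>M > 0\<close> by (intro add_strict_mono mult_strict_left_mono) auto
      also have "\<dots> = e" using \<open>M > 0\<close> by simp
      finally show ?thesis .
    qed
    with \<open>d1 > 0\<close> \<open>d2 > 0\<close> show "\<exists>d>0. \<forall>n u v. nonoverlapping_intervals a b n u v \<longrightarrow>
        (\<Sum>i<n. v i - u i) < d \<longrightarrow> (\<Sum>i<n. norm (f (v i) * g (v i) - f (u i) * g (u i))) < e"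
      by (intro exI[of _ "min d1 d2"]) auto
  qed
qed

lemma has_vector_derivative_straddle:
  fixes f :: "real \<Rightarrow> 'a::real_normed_vector"
  assumes "(f has_vector_derivative f') (at x within S)" and "e > 0"
  obtains d where "d > 0"
    and "\<And>u v. u \<in> S \<Longrightarrow> v \<in> S \<Longrightarrow> u \<le> x \<Longrightarrow> x \<le> v \<Longrightarrow> v - u < d \<Longrightarrow>
           norm ((v - u) *\<^sub>R f' - (f v - f u)) \<le> e * (v - u)"
proof -
  obtain d where "d > 0"
    and d: "\<And>y. y \<in> S \<Longrightarrow> norm (y - x) < d \<Longrightarrow> norm (f y - f x - (y - x) *\<^sub>R f') \<le> e * norm (y - x)"
    using assms unfolding has_vector_derivative_def has_derivative_within_alt by blast
  have "norm ((v - u) *\<^sub>R f' - (f v - f u)) \<le> e * (v - u)"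
    if "u \<in> S" "v \<in> S" "u \<le> x" "x \<le> v" "v - u < d" for u v
  proof -
    have "norm ((v - u) *\<^sub>R f' - (f v - f u))
        = norm ((f u - f x - (u - x) *\<^sub>R f') - (f v - f x - (v - x) *\<^sub>R f'))"
      by (simp add: algebra_simps)
    also have "\<dots> \<le> norm (f u - f x - (u - x) *\<^sub>R f') + norm (f v - f x - (v - x) *\<^sub>R f')"
      by (rule norm_triangle_ineq4)
    also have "\<dots> \<le> e * norm (u - x) + e * norm (v - x)"
      using that by (intro add_mono d) auto
    also have "\<dots> = e * (v - u)"
      using that by (simp add: algebra_simps)
    finally show ?thesis .
  qed
  with \<open>d > 0\<close> show thesis using that by blast
qed

lemma negligible_tagged_division_sum_small:
  fixes h :: "real \<Rightarrow> real"
  assumes "negligible E" and "e > 0"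
  obtains \<gamma> where "gauge \<gamma>"
    and "\<And>p. p tagged_division_of {a..b} \<Longrightarrow> \<gamma> fine p \<Longrightarrow>
           (\<Sum>(x, K)\<in>{xK \<in> p. fst xK \<in> E}. content K * h x) < e"
proof -
  have "((\<lambda>x. if x \<in> E then h x else 0) has_integral 0) {a..b}"
    using assms(1) by (rule has_integral_negligible) auto
  then obtain \<gamma> where "gauge \<gamma>"
    and \<gamma>: "\<And>p. p tagged_division_of {a..b} \<and> \<gamma> fine p \<Longrightarrow>
           norm ((\<Sum>(x, K)\<in>p. content K *\<^sub>R (if x \<in> E then h x else 0)) - 0) < e"
    using assms(2) unfolding has_integral_real by meson
  have "(\<Sum>(x, K)\<in>{xK \<in> p. fst xK \<in> E}. content K * h x) < e"
    if "p tagged_division_of {a..b}" "\<gamma> fine p" for p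
  proof -
    have "finite p" using that(1) by blast
    then have "(\<Sum>(x, K)\<in>{xK \<in> p. fst xK \<in> E}. content K * h x)
        = (\<Sum>(x, K)\<in>p. content K *\<^sub>R (if x \<in> E then h x else 0))"
      by (auto simp: sum.inter_filter split_def intro!: sum.cong)
    then show ?thesis using \<gamma>[of p] that by simp
  qed
  with \<open>gauge \<gamma>\<close> show thesis using that by blast
qed

lemma tagged_division_interval:
  assumes "p tagged_division_of {a..b}" and "(x, K) \<in> p"
  shows "K = {Inf K..Sup K}" and "Inf K \<le> Sup K" and "a \<le> Inf K" and "Sup K \<le> b"
    and "content K = Sup K - Inf K"
proof -
  obtain u v where K: "K = {u..v}" and "x \<in> K" and "K \<subseteq> {a..b}"
    using tagged_division_ofD(2-4)[OF assms] by (metis box_real(2))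
  then have "u \<le> v" by auto
  with K \<open>K \<subseteq> {a..b}\<close> show "K = {Inf K..Sup K}" "Inf K \<le> Sup K" "a \<le> Inf K" "Sup K \<le> b"
      "content K = Sup K - Inf K"
    by auto
qed

lemma disjoint_open_intervals_le:
  fixes u v u' v' :: real
  assumes "u < v" and "u' < v'" and "{u<..<v} \<inter> {u'<..<v'} = {}"
  shows "v \<le> u' \<or> v' \<le> u"
proof (rule ccontr)
  assume "\<not> ?thesis"
  then have "(max u u' + min v v') / 2 \<in> {u<..<v} \<inter> {u'<..<v'}"
    using assms(1,2) by (auto simp: max_def min_def)
  with assms(3) show False by blast
qed

lemma tagged_division_subset_enumerate:
  assumes p: "p tagged_division_of {a..b}" and "q \<subseteq> p"
  obtains n :: nat and u v :: "nat \<Rightarrow> real"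
  where "nonoverlapping_intervals a b n u v"
    and "\<And>g :: real \<Rightarrow> real \<Rightarrow> real. (\<And>c. g c c = 0) \<Longrightarrow> (\<Sum>(x, K)\<in>q. g (Inf K) (Sup K)) = (\<Sum>i<n. g (u i) (v i))"
proof -
  define q' where "q' = {xK \<in> q. Inf (snd xK) < Sup (snd xK)}"
  have "finite q" using p \<open>q \<subseteq> p\<close> finite_subset by blast
  then have "finite q'" by (simp add: q'_def)
  then obtain h where h: "bij_betw h {..<card q'} q'"
    using ex_bij_betw_nat_finite lessThan_atLeast0 by metis
  have hq: "h i \<in> p" "Inf (snd (h i)) < Sup (snd (h i))" if "i < card q'" for i
    using h that \<open>q \<subseteq> p\<close> by (auto simp: q'_def bij_betw_def)
  define u where "u i = Inf (snd (h i))" for i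
  define v where "v i = Sup (snd (h i))" for i
  have bounds: "a \<le> u i \<and> u i \<le> v i \<and> v i \<le> b" if "i < card q'" for i
    using tagged_division_interval(2-4)[OF p, of "fst (h i)" "snd (h i)"] hq(1)[OF that]
    by (simp add: u_def v_def)
  have "v i \<le> u j \<or> v j \<le> u i" if "i < card q'" "j < card q'" "i \<noteq> j" for i j
  proof (rule disjoint_open_intervals_le)
    show "u i < v i" "u j < v j" using hq that by (auto simp: u_def v_def)
    have "h i \<noteq> h j" using h that by (auto simp: bij_betw_def inj_on_def)
    then have "interior (snd (h i)) \<inter> interior (snd (h j)) = {}"
      using tagged_division_ofD(5)[OF p, of "fst (h i)" "snd (h i)" "fst (h j)" "snd (h j)"] hq that
      by simp
    then show "{u i<..<v i} \<inter> {u j<..<v j} = {}"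
      using tagged_division_interval(1)[OF p, of "fst (h i)"] tagged_division_interval(1)[OF p, of "fst (h j)"]
        hq(1) that by (metis interior_atLeastAtMost_real prod.collapse u_def v_def)
  qed
  moreover have "(\<Sum>(x, K)\<in>q. g (Inf K) (Sup K)) = (\<Sum>i<card q'. g (u i) (v i))"
    if "\<And>c. g c c = 0" for g :: "real \<Rightarrow> real \<Rightarrow> real"
  proof -
    have "(\<Sum>(x, K)\<in>q. g (Inf K) (Sup K)) = (\<Sum>(x, K)\<in>q'. g (Inf K) (Sup K))"
    proof (rule sum.mono_neutral_right[OF \<open>finite q\<close>])
      show "\<forall>xK\<in>q - q'. (case xK of (x, K) \<Rightarrow> g (Inf K) (Sup K)) = 0"
        using tagged_division_interval(2)[OF p] \<open>q \<subseteq> p\<close> that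
        by (force simp: q'_def)
    qed (auto simp: q'_def)
    also have "\<dots> = (\<Sum>i<card q'. g (u i) (v i))"
      using sum.reindex_bij_betw[OF h, of "\<lambda>(x, K). g (Inf K) (Sup K)"]
      by (simp add: u_def v_def split_def)
    finally show ?thesis .
  qed
  ultimately show thesis
    using that[of "card q'" u v] bounds by (simp add: nonoverlapping_intervals_def)
qed

lemma abs_continuous_on_tagged_division:
  assumes "abs_continuous_on a b f" and "e > 0"
  obtains d where "d > 0"
    and "\<And>p q. p tagged_division_of {a..b} \<Longrightarrow> q \<subseteq> p \<Longrightarrow> (\<Sum>(x, K)\<in>q. content K) < d \<Longrightarrow>
           (\<Sum>(x, K)\<in>q. norm (f (Sup K) - f (Inf K))) < e"
proof -
  obtain d where "d > 0"
    and d: "\<And>n u v. nonoverlapping_intervals a b n u v \<Longrightarrow> (\<Sum>i<n. v i - u i) < d \<Longrightarrow>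
           (\<Sum>i<n. norm (f (v i) - f (u i))) < e"
    by (rule abs_continuous_onD[OF assms]) (rule that)
  have "(\<Sum>(x, K)\<in>q. norm (f (Sup K) - f (Inf K))) < e"
    if p: "p tagged_division_of {a..b}" and "q \<subseteq> p" and small: "(\<Sum>(x, K)\<in>q. content K) < d"
    for p q
  proof (rule tagged_division_subset_enumerate[OF p \<open>q \<subseteq> p\<close>])
    fix n u v
    assume uv: "nonoverlapping_intervals a b n u v"
      and sums: "\<And>g :: real \<Rightarrow> real \<Rightarrow> real. (\<And>c. g c c = 0) \<Longrightarrow>
        (\<Sum>(x, K)\<in>q. g (Inf K) (Sup K)) = (\<Sum>i<n. g (u i) (v i))"
    have "(\<Sum>(x, K)\<in>q. content K) = (\<Sum>(x, K)\<in>q. Sup K - Inf K)"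
      using tagged_division_interval(5)[OF p] \<open>q \<subseteq> p\<close> by (intro sum.cong) auto
    then have "(\<Sum>i<n. v i - u i) < d"
      using small sums[of "\<lambda>s t. t - s"] by simp
    then show ?thesis
      using d[OF uv] sums[of "\<lambda>s t. norm (f t - f s)"] by simp
  qed
  with \<open>d > 0\<close> show thesis using that by blast
qed

lemma has_vector_derivative_straddle_gauge:
  fixes f :: "real \<Rightarrow> 'a::real_normed_vector"
  assumes deriv: "\<And>x. x \<in> S - E \<Longrightarrow> (f has_vector_derivative f' x) (at x within S)" and "\<eta> > 0"
  obtains d where "\<And>x. d x > 0"
    and "\<And>x u v. x \<in> S - E \<Longrightarrow> u \<in> S \<Longrightarrow> v \<in> S \<Longrightarrow> u \<le> x \<Longrightarrow> x \<le> v \<Longrightarrow> v - u < d x \<Longrightarrow>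
           norm ((v - u) *\<^sub>R f' x - (f v - f u)) \<le> \<eta> * (v - u)"
proof -
  have "\<exists>d>0. x \<in> S - E \<longrightarrow> (\<forall>u v. u \<in> S \<longrightarrow> v \<in> S \<longrightarrow> u \<le> x \<longrightarrow> x \<le> v \<longrightarrow> v - u < d \<longrightarrow>
      norm ((v - u) *\<^sub>R f' x - (f v - f u)) \<le> \<eta> * (v - u))" for x
  proof (cases "x \<in> S - E")
    case True
    show ?thesis
    proof (rule has_vector_derivative_straddle[OF deriv[OF True] \<open>\<eta> > 0\<close>])
      fix d :: real
      assume "d > 0" and "\<And>u v. u \<in> S \<Longrightarrow> v \<in> S \<Longrightarrow> u \<le> x \<Longrightarrow> x \<le> v \<Longrightarrow> v - u < d \<Longrightarrow>
          norm ((v - u) *\<^sub>R f' x - (f v - f u)) \<le> \<eta> * (v - u)"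
      then show ?thesis by blast
    qed
  qed (auto intro: exI[of _ 1])
  then have "\<exists>d. \<forall>x. d x > 0 \<and> (x \<in> S - E \<longrightarrow> (\<forall>u v. u \<in> S \<longrightarrow> v \<in> S \<longrightarrow> u \<le> x \<longrightarrow> x \<le> v \<longrightarrow>
      v - u < d x \<longrightarrow> norm ((v - u) *\<^sub>R f' x - (f v - f u)) \<le> \<eta> * (v - u)))"
    by (intro choice allI)
  then show thesis using that by blast
qed

lemma has_vector_derivative_tagged_division_estimate:
  fixes f :: "real \<Rightarrow> 'a::real_normed_vector"
  assumes "a \<le> b" and deriv: "\<And>x. x \<in> {a..b} - E \<Longrightarrow> (f has_vector_derivative f' x) (at x within {a..b})"
    and "\<eta> > 0"
  obtains \<gamma> where "gauge \<gamma>"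
    and "\<And>p. p tagged_division_of {a..b} \<Longrightarrow> \<gamma> fine p \<Longrightarrow>
           (\<Sum>(x, K)\<in>{xK \<in> p. fst xK \<notin> E}. norm (content K *\<^sub>R f' x - (f (Sup K) - f (Inf K)))) \<le> \<eta> * (b - a)"
proof -
  obtain d where "\<And>x. d x > 0"
    and d: "\<And>x u v. x \<in> {a..b} - E \<Longrightarrow> u \<in> {a..b} \<Longrightarrow> v \<in> {a..b} \<Longrightarrow> u \<le> x \<Longrightarrow> x \<le> v \<Longrightarrow>
      v - u < d x \<Longrightarrow> norm ((v - u) *\<^sub>R f' x - (f v - f u)) \<le> \<eta> * (v - u)"
    by (rule has_vector_derivative_straddle_gauge[where E = E, OF deriv \<open>\<eta> > 0\<close>]) (assumption, rule that)
  have "(\<Sum>(x, K)\<in>{xK \<in> p. fst xK \<notin> E}. norm (content K *\<^sub>R f' x - (f (Sup K) - f (Inf K)))) \<le> \<eta> * (b - a)"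
    if p: "p tagged_division_of {a..b}" and fine: "(\<lambda>x. ball x (d x / 2)) fine p" for p
  proof -
    have "norm (content K *\<^sub>R f' x - (f (Sup K) - f (Inf K))) \<le> \<eta> * content K"
      if "(x, K) \<in> p" "x \<notin> E" for x K
    proof -
      note K = tagged_division_interval[OF p that(1)]
      have "x \<in> K" "K \<subseteq> ball x (d x / 2)" using p fine that(1) by blast+
      moreover have "Inf K \<in> K" "Sup K \<in> K"
        using K(1,2) by (metis atLeastAtMost_iff order_refl)+
      ultimately have "Inf K \<le> x" "x \<le> Sup K" "dist x (Inf K) < d x / 2" "dist x (Sup K) < d x / 2"
        using K(1) by (fastforce simp: subset_iff)+
      moreover from this have "Sup K - Inf K < d x"
        by (simp add: dist_real_def)
      ultimately show ?thesis
        using d[of x "Inf K" "Sup K"] K that by auto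
    qed
    then have "(\<Sum>(x, K)\<in>{xK \<in> p. fst xK \<notin> E}. norm (content K *\<^sub>R f' x - (f (Sup K) - f (Inf K))))
        \<le> (\<Sum>(x, K)\<in>p. \<eta> * content K)"
      using p \<open>\<eta> > 0\<close> by (intro order_trans[OF sum_mono sum_mono2]) auto
    also have "\<dots> = \<eta> * (b - a)"
      using additive_content_tagged_division[of p a b] p \<open>a \<le> b\<close>
      by (simp add: split_def flip: sum_distrib_left)
    finally show ?thesis .
  qed
  moreover have "gauge (\<lambda>x. ball x (d x / 2))"
    using \<open>\<And>x. d x > 0\<close> by (intro gauge_ball_dependent) auto
  ultimately show thesis using that by blast
qed

theorem fundamental_theorem_of_calculus_abs_continuous:
  fixes f :: "real \<Rightarrow> 'a::banach"
  assumes "a \<le> b" and ac: "abs_continuous_on a b f" and "negligible E"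
    and deriv: "\<And>x. x \<in> {a..b} - E \<Longrightarrow> (f has_vector_derivative f' x) (at x within {a..b})"
  shows "(f' has_integral (f b - f a)) {a..b}"
  unfolding has_integral_real
proof (intro allI impI)
  fix e :: real assume "e > 0"
  then have "e / 4 > 0" "e / (4 * (b - a + 1)) > 0" using \<open>a \<le> b\<close> by simp_all
  obtain \<gamma> where "gauge \<gamma>" and \<gamma>: "\<And>p. p tagged_division_of {a..b} \<Longrightarrow> \<gamma> fine p \<Longrightarrow>
      (\<Sum>(x, K)\<in>{xK \<in> p. fst xK \<notin> E}. norm (content K *\<^sub>R f' x - (f (Sup K) - f (Inf K))))
        \<le> e / (4 * (b - a + 1)) * (b - a)"
    by (rule has_vector_derivative_tagged_division_estimate[where E = E, OF \<open>a \<le> b\<close> deriv \<open>e / (4 * (b - a + 1)) > 0\<close>])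
      (assumption, rule that)
  obtain \<delta> where "\<delta> > 0"
    and \<delta>: "\<And>p q. p tagged_division_of {a..b} \<Longrightarrow> q \<subseteq> p \<Longrightarrow> (\<Sum>(x, K)\<in>q. content K) < \<delta> \<Longrightarrow>
           (\<Sum>(x, K)\<in>q. norm (f (Sup K) - f (Inf K))) < e / 4"
    by (rule abs_continuous_on_tagged_division[OF ac \<open>e / 4 > 0\<close>]) (rule that)
  obtain \<gamma>1 where "gauge \<gamma>1" and \<gamma>1: "\<And>p. p tagged_division_of {a..b} \<Longrightarrow> \<gamma>1 fine p \<Longrightarrow>
           (\<Sum>(x, K)\<in>{xK \<in> p. fst xK \<in> E}. content K * 1) < \<delta>"
    by (rule negligible_tagged_division_sum_small[OF \<open>negligible E\<close> \<open>\<delta> > 0\<close>]) (rule that)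
  obtain \<gamma>2 where "gauge \<gamma>2" and \<gamma>2: "\<And>p. p tagged_division_of {a..b} \<Longrightarrow> \<gamma>2 fine p \<Longrightarrow>
           (\<Sum>(x, K)\<in>{xK \<in> p. fst xK \<in> E}. content K * norm (f' x)) < e / 4"
    by (rule negligible_tagged_division_sum_small[OF \<open>negligible E\<close> \<open>e / 4 > 0\<close>]) (rule that)
  have "norm ((\<Sum>(x, K)\<in>p. content K *\<^sub>R f' x) - (f b - f a)) < e"
    if p: "p tagged_division_of {a..b}" and fine: "(\<lambda>x. \<gamma> x \<inter> \<gamma>1 x \<inter> \<gamma>2 x) fine p" for p
  proof -
    define T where "T = (\<lambda>(x, K). content K *\<^sub>R f' x - (f (Sup K) - f (Inf K)))"
    define pE where "pE = {xK \<in> p. fst xK \<in> E}"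
    have "finite p" using p by blast
    have "(\<Sum>(x, K)\<in>p. content K *\<^sub>R f' x) - (f b - f a) = (\<Sum>xK\<in>p. T xK)"
      using additive_tagged_division_1[OF \<open>a \<le> b\<close> p, of f] by (simp add: T_def split_def sum_subtractf)
    also have "\<dots> = (\<Sum>xK\<in>p - pE. T xK) + (\<Sum>xK\<in>pE. T xK)"
      using \<open>finite p\<close> by (intro sum.subset_diff) (auto simp: pE_def)
    finally have split: "(\<Sum>(x, K)\<in>p. content K *\<^sub>R f' x) - (f b - f a)
        = (\<Sum>xK\<in>p - pE. T xK) + (\<Sum>xK\<in>pE. T xK)" .
    have "norm (\<Sum>xK\<in>p - pE. T xK) \<le> e / 4"
    proof -
      have "p - pE = {xK \<in> p. fst xK \<notin> E}" by (auto simp: pE_def)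
      then have "norm (\<Sum>xK\<in>p - pE. T xK) \<le> e / (4 * (b - a + 1)) * (b - a)"
        using \<gamma>[OF p] fine by (auto simp: T_def split_def fine_Int intro: order_trans[OF norm_sum])
      also have "\<dots> \<le> e / 4"
        using \<open>a \<le> b\<close> \<open>e > 0\<close> by (simp add: field_simps)
      finally show ?thesis .
    qed
    moreover have "norm (\<Sum>xK\<in>pE. T xK)
        \<le> (\<Sum>(x, K)\<in>pE. content K * norm (f' x)) + (\<Sum>(x, K)\<in>pE. norm (f (Sup K) - f (Inf K)))"
      using tagged_division_interval(2,5)[OF p]
      by (auto simp: T_def split_def sum.distrib[symmetric] pE_def
          intro!: order_trans[OF norm_sum] sum_mono order_trans[OF norm_triangle_ineq4])
    moreover have "(\<Sum>(x, K)\<in>pE. content K * norm (f' x)) < e / 4"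
      using \<gamma>2[OF p] fine by (simp add: pE_def fine_Int)
    moreover have "(\<Sum>(x, K)\<in>pE. norm (f (Sup K) - f (Inf K))) < e / 4"
      using \<gamma>1[OF p] fine by (intro \<delta>[OF p]) (auto simp: pE_def fine_Int)
    ultimately show ?thesis
      unfolding split using norm_triangle_ineq[of "\<Sum>xK\<in>p - pE. T xK" "\<Sum>xK\<in>pE. T xK"] \<open>e > 0\<close>
      by linarith
  qed
  moreover have "gauge (\<lambda>x. \<gamma> x \<inter> \<gamma>1 x \<inter> \<gamma>2 x)"
    using \<open>gauge \<gamma>\<close> \<open>gauge \<gamma>1\<close> \<open>gauge \<gamma>2\<close> by (intro gauge_Int)
  ultimately show "\<exists>\<gamma>. gauge \<gamma> \<and> (\<forall>p. p tagged_division_of {a..b} \<and> \<gamma> fine p \<longrightarrow>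
          norm ((\<Sum>(x, K)\<in>p. content K *\<^sub>R f' x) - (f b - f a)) < e)"
    by blast
qed

lemma Cauchy_Schwarz_ineq_integral:
  fixes f g :: "'a::euclidean_space \<Rightarrow> real"
  assumes f2: "(\<lambda>x. f x ^ 2) integrable_on S" and g2: "(\<lambda>x. g x ^ 2) integrable_on S"
    and fg: "(\<lambda>x. f x * g x) integrable_on S"
  shows "integral S (\<lambda>x. f x * g x) \<le> sqrt (integral S (\<lambda>x. f x ^ 2)) * sqrt (integral S (\<lambda>x. g x ^ 2))"
proof -
  define A where "A = integral S (\<lambda>x. f x ^ 2)"
  define B where "B = integral S (\<lambda>x. g x ^ 2)"
  define C where "C = integral S (\<lambda>x. f x * g x)"
  have "A \<ge> 0" "B \<ge> 0"
    unfolding A_def B_def using f2 g2 by (auto intro: integral_nonneg)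
  have quadratic: "0 \<le> t\<^sup>2 * A - 2 * t * C + B" for t :: real
  proof -
    have "(\<lambda>x. t\<^sup>2 * f x ^ 2 - 2 * t * (f x * g x) + g x ^ 2) integrable_on S"
      using f2 g2 fg by (intro integrable_add integrable_diff integrable_on_mult_right)
    then have "0 \<le> integral S (\<lambda>x. t\<^sup>2 * f x ^ 2 - 2 * t * (f x * g x) + g x ^ 2)"
    proof (rule integral_nonneg)
      fix x
      have "t\<^sup>2 * f x ^ 2 - 2 * t * (f x * g x) + g x ^ 2 = (t * f x - g x)\<^sup>2"
        by (simp add: power2_eq_square algebra_simps)
      then show "0 \<le> t\<^sup>2 * f x ^ 2 - 2 * t * (f x * g x) + g x ^ 2" by simp
    qed
    also have "\<dots> = t\<^sup>2 * A - 2 * t * C + B"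
      using f2 g2 fg by (simp add: integral_add integral_diff integrable_diff integrable_on_mult_right
          A_def B_def C_def)
    finally show ?thesis .
  qed
  have "C \<le> sqrt A * sqrt B"
  proof (cases "A = 0")
    case True
    have "C \<le> 0"
    proof (rule ccontr)
      assume "\<not> C \<le> 0"
      with True quadratic[of "(B + 1) / (2 * C)"] show False by (simp add: field_simps)
    qed
    also have "0 \<le> sqrt A * sqrt B" using \<open>A \<ge> 0\<close> \<open>B \<ge> 0\<close> by simp
    finally show ?thesis .
  next
    case False
    with \<open>A \<ge> 0\<close> have "A > 0" by simp
    with quadratic[of "C / A"] have "C\<^sup>2 \<le> A * B"
      by (simp add: field_simps power2_eq_square)
    then have "sqrt (C\<^sup>2) \<le> sqrt (A * B)" by (rule real_sqrt_le_mono)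
    then show ?thesis by (simp add: real_sqrt_mult)
  qed
  then show ?thesis by (simp add: A_def B_def C_def)
qed

lemma absolutely_integrable_continuous_scaleR:
  fixes f :: "real \<Rightarrow> 'b::euclidean_space"
  assumes "continuous_on {a..b} f" and "g absolutely_integrable_on {a..b}"
  shows "(\<lambda>x. g x *\<^sub>R f x) absolutely_integrable_on {a..b}"
proof -
  have "bilinear (\<lambda>(z::'b) (r::real). r *\<^sub>R z)"
    by (simp add: bilinear_def linear_iff algebra_simps)
  moreover have "bounded (f ` {a..b})"
    using assms(1) by (intro compact_imp_bounded compact_continuous_image) auto
  ultimately show ?thesis
    using absolutely_integrable_bounded_measurable_product[of "\<lambda>z r. r *\<^sub>R z" f "{a..b}" g]
      continuous_imp_measurable_on_sets_lebesgue[OF assms(1)] assms(2)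
    by simp
qed

lemma cmod_square_le_integral_boundary_zero:
  fixes y y' :: "real \<Rightarrow> complex"
  assumes deriv: "\<And>t. t \<in> {a..b} \<Longrightarrow> (y has_vector_derivative y' t) (at t within {a..b})"
    and "continuous_on {a..b} y'" and "y a = 0" and "y b = 0" and x: "x \<in> {a..b}"
  shows "cmod (y x)^2 \<le> integral {a..b} (\<lambda>t. cmod (y' t) * cmod (y t))"
proof -
  have "continuous_on {a..b} y"
    using deriv has_vector_derivative_continuous continuous_on_eq_continuous_within by blast
  define g where "g t = 2 * (cmod (y' t) * cmod (y t))" for t
  have "continuous_on {a..b} g"
    unfolding g_def using \<open>continuous_on {a..b} y\<close> assms(2) by (intro continuous_intros)
  define Du where "Du t = y t * cnj (y' t) + y' t * cnj (y t)" for t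
  have Du: "((\<lambda>t. y t * cnj (y t)) has_vector_derivative Du t) (at t within {a..b})" if "t \<in> {a..b}" for t
    unfolding Du_def using deriv[OF that] by (intro has_vector_derivative_mult has_vector_derivative_cnj)
  have "norm (Du t) \<le> g t" for t
    unfolding Du_def g_def by (rule order_trans[OF norm_triangle_ineq]) (simp add: norm_mult)
  have bound: "\<bar>cmod (y s)^2 - cmod (y r)^2\<bar> \<le> integral {r..s} g" if "a \<le> r" "r \<le> s" "s \<le> b" for r s
  proof -
    have sub: "{r..s} \<subseteq> {a..b}" using that by auto
    have "(Du has_integral (y s * cnj (y s) - y r * cnj (y r))) {r..s}"
      using sub by (intro fundamental_theorem_of_calculus \<open>r \<le> s\<close>) (auto intro: has_vector_derivative_within_subset[OF Du])
    moreover have "g integrable_on {r..s}"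
      using \<open>continuous_on {a..b} g\<close> sub by (intro integrable_continuous_interval) (rule continuous_on_subset)
    ultimately have "norm (y s * cnj (y s) - y r * cnj (y r)) \<le> integral {r..s} g"
      using \<open>\<And>t. norm (Du t) \<le> g t\<close>
      by (metis has_integral_integrable integral_norm_bound_integral integral_unique)
    then show ?thesis
      by (simp add: complex_norm_square[symmetric] flip: of_real_diff of_real_power)
  qed
  have "integral {a..x} g + integral {x..b} g = integral {a..b} g"
    using x \<open>continuous_on {a..b} g\<close>
    by (intro Henstock_Kurzweil_Integration.integral_combine integrable_continuous_interval) auto
  moreover have "integral {a..b} g = 2 * integral {a..b} (\<lambda>t. cmod (y' t) * cmod (y t))"
    by (simp add: g_def[abs_def])
  ultimately show ?thesis
    using bound[of a x] bound[of x b] x \<open>y a = 0\<close> \<open>y b = 0\<close> by auto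
qed

lemma eigenfunction_weighted_identity:
  fixes q w g g' :: "real \<Rightarrow> real" and y y' :: "real \<Rightarrow> complex" and lam :: complex
  assumes "a \<le> b"
    and q: "q absolutely_integrable_on {a..b}" and w: "w absolutely_integrable_on {a..b}"
    and y: "abs_continuous_on a b y" and y': "abs_continuous_on a b y'"
    and y_deriv: "\<And>x. x \<in> {a..b} \<Longrightarrow> (y has_vector_derivative y' x) (at x within {a..b})"
    and eq: "AE x in lebesgue. x \<in> {a..b} \<longrightarrow> (\<exists>d. (y' has_vector_derivative d) (at x) \<and>
               - d + complex_of_real (q x) * y x = lam * complex_of_real (w x) * y x)"
    and "y a = 0" and "y b = 0"
    and g: "abs_continuous_on a b g"
    and g_deriv: "AE x in lebesgue. x \<in> {a..b} \<longrightarrow> (g has_real_derivative g' x) (at x)"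
    and g': "g' absolutely_integrable_on {a..b}"
  shows "integral {a..b} (\<lambda>x. g' x *\<^sub>R (y' x * cnj (y x)))
      + of_real (integral {a..b} (\<lambda>x. g x * cmod (y' x)^2) + integral {a..b} (\<lambda>x. q x * (g x * cmod (y x)^2)))
      = lam * of_real (integral {a..b} (\<lambda>x. w x * (g x * cmod (y x)^2)))"
proof -
  have "AE x in lebesgue. x \<in> {a..b} \<longrightarrow> (\<exists>d. (y' has_vector_derivative d) (at x) \<and>
          - d + complex_of_real (q x) * y x = lam * complex_of_real (w x) * y x) \<and>
          (g has_real_derivative g' x) (at x)"
    using eq g_deriv by eventually_elim blast
  then obtain N where "negligible N"
    and N: "\<And>x. x \<in> {a..b} - N \<Longrightarrow> (\<exists>d. (y' has_vector_derivative d) (at x) \<and>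
          - d + complex_of_real (q x) * y x = lam * complex_of_real (w x) * y x) \<and>
          (g has_real_derivative g' x) (at x)"
    unfolding eventually_ae_filter_negligible by blast
  have cont: "continuous_on {a..b} y" "continuous_on {a..b} y'" "continuous_on {a..b} g"
    using y y' g by (simp_all add: abs_continuous_on_imp_continuous_on)
  define D where "D x = g' x *\<^sub>R (y' x * cnj (y x)) + of_real (g x * cmod (y' x)^2)
      + of_real (q x * (g x * cmod (y x)^2)) - lam * of_real (w x * (g x * cmod (y x)^2))" for x
  have "((\<lambda>x. y' x * cnj (y x) * of_real (g x)) has_vector_derivative D x) (at x within {a..b})"
    if x: "x \<in> {a..b} - N" for x
  proof -
    obtain d where d: "(y' has_vector_derivative d) (at x)"
      and d_eq: "d = (of_real (q x) - lam * of_real (w x)) * y x"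
      and g_x: "(g has_real_derivative g' x) (at x)"
      using N[OF x] by (force simp: algebra_simps)
    have "((\<lambda>x. y' x * cnj (y x) * of_real (g x)) has_vector_derivative
        y' x * cnj (y x) * of_real (g' x) + (y' x * cnj (y' x) + d * cnj (y x)) * of_real (g x))
        (at x within {a..b})"
      using x by (intro has_vector_derivative_mult has_vector_derivative_cnj has_vector_derivative_of_real
          has_vector_derivative_at_within[OF d] y_deriv has_field_derivative_at_within[OF g_x]) auto
    moreover have "y' x * cnj (y x) * of_real (g' x) + (y' x * cnj (y' x) + d * cnj (y x)) * of_real (g x) = D x"
    proof -
      have "y' x * cnj (y' x) = of_real (cmod (y' x)^2)"
        by (simp add: complex_norm_square[symmetric])
      moreover have "d * cnj (y x) = (of_real (q x) - lam * of_real (w x)) * of_real (cmod (y x)^2)"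
        by (simp add: d_eq mult.assoc complex_norm_square[symmetric])
      ultimately show ?thesis
        by (simp only:) (simp add: D_def algebra_simps scaleR_conv_of_real)
    qed
    ultimately show ?thesis by simp
  qed
  then have "(D has_integral (y' b * cnj (y b) * of_real (g b) - y' a * cnj (y a) * of_real (g a))) {a..b}"
    using \<open>a \<le> b\<close> \<open>negligible N\<close>
    by (intro fundamental_theorem_of_calculus_abs_continuous abs_continuous_on_mult abs_continuous_on_cnj
        abs_continuous_on_of_real y y' g) auto
  then have "(D has_integral 0) {a..b}"
    using \<open>y a = 0\<close> \<open>y b = 0\<close> by simp
  moreover have "(D has_integral
      (integral {a..b} (\<lambda>x. g' x *\<^sub>R (y' x * cnj (y x)))
       + of_real (integral {a..b} (\<lambda>x. g x * cmod (y' x)^2))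
       + of_real (integral {a..b} (\<lambda>x. q x * (g x * cmod (y x)^2)))
       - lam * of_real (integral {a..b} (\<lambda>x. w x * (g x * cmod (y x)^2))))) {a..b}"
  proof -
    have weight: "continuous_on {a..b} (\<lambda>x. g x * cmod (y x)^2)"
      using cont by (intro continuous_intros)
    have "(\<lambda>x. g' x *\<^sub>R (y' x * cnj (y x))) absolutely_integrable_on {a..b}"
      using cont by (intro absolutely_integrable_continuous_scaleR g' continuous_intros)
    moreover have "(\<lambda>x. g x * cmod (y' x)^2) absolutely_integrable_on {a..b}"
      using cont by (intro absolutely_integrable_continuous_real continuous_intros)
    moreover have "(\<lambda>x. q x * (g x * cmod (y x)^2)) absolutely_integrable_on {a..b}"
      using absolutely_integrable_continuous_scaleR[OF weight q] by simp
    moreover have "(\<lambda>x. w x * (g x * cmod (y x)^2)) absolutely_integrable_on {a..b}"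
      using absolutely_integrable_continuous_scaleR[OF weight w] by simp
    note ints = calculation this
    note ints = ints[THEN set_lebesgue_integral_eq_integral(1), THEN integrable_integral]
    show ?thesis
      unfolding D_def[abs_def]
      by (intro has_integral_add has_integral_diff has_integral_mult_right has_integral_of_real ints)
  qed
  ultimately have "integral {a..b} (\<lambda>x. g' x *\<^sub>R (y' x * cnj (y x)))
       + of_real (integral {a..b} (\<lambda>x. g x * cmod (y' x)^2))
       + of_real (integral {a..b} (\<lambda>x. q x * (g x * cmod (y x)^2)))
       - lam * of_real (integral {a..b} (\<lambda>x. w x * (g x * cmod (y x)^2))) = 0"
    by (rule has_integral_unique[symmetric])
  then show ?thesis
    by (simp add: algebra_simps)
qed

lemma integral_weight_square_lower_bound:
  fixes f w :: "real \<Rightarrow> real"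
  assumes "S \<in> lmeasurable" and "w \<in> borel_measurable (lebesgue_on S)"
    and "f integrable_on S" and "(\<lambda>x. f x * w x ^ 2) integrable_on S"
    and f: "\<And>x. x \<in> S \<Longrightarrow> 0 \<le> f x \<and> f x \<le> M" and "\<epsilon> > 0"
  shows "\<epsilon> * integral S f - \<epsilon> * M * measure lebesgue {x \<in> S. w x ^ 2 < \<epsilon>}
           \<le> integral S (\<lambda>x. f x * w x ^ 2)"
proof -
  define T where "T = {x \<in> S. w x ^ 2 < \<epsilon>}"
  have "(\<lambda>x. w x ^ 2) \<in> borel_measurable (lebesgue_on S)"
    using assms(2) by measurable
  then have "(\<lambda>x. w x ^ 2) -` {..<\<epsilon>} \<inter> space (lebesgue_on S) \<in> sets (lebesgue_on S)"
    by (rule measurable_sets) simp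
  moreover have "(\<lambda>x. w x ^ 2) -` {..<\<epsilon>} \<inter> space (lebesgue_on S) = T"
    by (auto simp: T_def space_restrict_space)
  ultimately have "T \<in> sets lebesgue"
    using assms(1) by (simp add: sets_restrict_space_iff)
  then have "T \<in> lmeasurable"
    by (intro fmeasurableI2[OF assms(1)]) (auto simp: T_def)
  then have T: "indicat_real T integrable_on S" "integral S (indicat_real T) = measure lebesgue T"
    by (simp_all add: integrable_on_indicator integral_indicator Int_absorb2 T_def subset_eq)
  have "integral S (\<lambda>x. \<epsilon> * f x - \<epsilon> * M * indicat_real T x) \<le> integral S (\<lambda>x. f x * w x ^ 2)"
  proof (rule integral_le)
    show "(\<lambda>x. \<epsilon> * f x - \<epsilon> * M * indicat_real T x) integrable_on S"
      using T assms(3) by (intro integrable_diff integrable_on_mult_right)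
    show "\<epsilon> * f x - \<epsilon> * M * indicat_real T x \<le> f x * w x ^ 2" if "x \<in> S" for x
    proof (cases "x \<in> T")
      case True
      have "\<epsilon> * f x \<le> \<epsilon> * M" "0 \<le> f x * w x ^ 2"
        using f[OF that] \<open>\<epsilon> > 0\<close> by simp_all
      then show ?thesis using True by simp
    next
      case False
      then have "\<epsilon> \<le> w x ^ 2" using that by (auto simp: T_def)
      then have "\<epsilon> * f x \<le> w x ^ 2 * f x" using f[OF that] by (intro mult_right_mono) auto
      then show ?thesis using False by (simp add: mult.commute)
    qed
  qed (use assms(4) in blast)
  then show ?thesis
    using T assms(3) by (simp add: T_def integral_diff integrable_on_mult_right)
qed

lemma sup_norm_interpolation:
  fixes A N B Q :: real
  assumes "B > 0" and "0 \<le> A" and energy: "A \<le> B\<^sup>2 * Q"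
    and sup: "B\<^sup>2 \<le> sqrt A * sqrt N" and mass: "N \<le> 2 * B\<^sup>2"
  shows "N > 0" and "1 \<le> 2 * Q" and "B\<^sup>2 \<le> N * Q" and "B * sqrt A \<le> 2 * N * Q\<^sup>2"
proof -
  have "B\<^sup>2 > 0" using \<open>B > 0\<close> by simp
  have "sqrt A * sqrt N > 0" using sup \<open>B\<^sup>2 > 0\<close> by linarith
  then have "sqrt A > 0" "sqrt N > 0"
    using \<open>0 \<le> A\<close> by (auto simp: zero_less_mult_iff)
  then show "N > 0" by simp
  have "B\<^sup>2 * B\<^sup>2 \<le> (sqrt A * sqrt N) * (sqrt A * sqrt N)"
    using sup \<open>B\<^sup>2 > 0\<close> \<open>sqrt A * sqrt N > 0\<close> by (intro mult_mono) auto
  also have "\<dots> = A * N"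
    using \<open>0 \<le> A\<close> \<open>N > 0\<close> by (simp add: algebra_simps)
  also have "\<dots> \<le> (2 * A) * B\<^sup>2"
    using mult_left_mono[OF mass \<open>0 \<le> A\<close>] by (simp add: algebra_simps)
  finally have B_le_A: "B\<^sup>2 \<le> 2 * A"
    using \<open>B\<^sup>2 > 0\<close> by (rule mult_right_le_imp_le)
  then have "B\<^sup>2 * 1 \<le> B\<^sup>2 * (2 * Q)"
    using energy by simp
  then show "1 \<le> 2 * Q"
    using \<open>B\<^sup>2 > 0\<close> by (rule mult_left_le_imp_le)
  have "sqrt A * sqrt A \<le> (sqrt A * sqrt N) * Q"
    using energy sup \<open>0 \<le> A\<close> \<open>1 \<le> 2 * Q\<close> by (simp add: order_trans mult_right_mono)
  then have "sqrt A * sqrt A \<le> sqrt A * (sqrt N * Q)"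
    by (simp only: mult.assoc)
  then have sA: "sqrt A \<le> sqrt N * Q"
    using \<open>sqrt A > 0\<close> by (rule mult_left_le_imp_le)
  have "B\<^sup>2 \<le> sqrt A * sqrt N" by (fact sup)
  also have "\<dots> \<le> (sqrt N * Q) * sqrt N"
    using mult_right_mono[OF sA, of "sqrt N"] \<open>sqrt N > 0\<close> by simp
  finally show BN: "B\<^sup>2 \<le> N * Q"
    using \<open>N > 0\<close> by (simp add: algebra_simps)
  have "A \<le> N * Q\<^sup>2"
    using power_mono[OF sA, of 2] \<open>0 \<le> A\<close> \<open>N > 0\<close> by (simp add: power_mult_distrib)
  have "(B * sqrt A)\<^sup>2 = B\<^sup>2 * A"
    using \<open>0 \<le> A\<close> by (simp add: power_mult_distrib)
  also have "\<dots> \<le> (N * Q) * (N * Q\<^sup>2)"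
    using BN \<open>A \<le> N * Q\<^sup>2\<close> \<open>0 \<le> A\<close> \<open>N > 0\<close> \<open>1 \<le> 2 * Q\<close> by (intro mult_mono) auto
  also have "\<dots> \<le> ((N * Q) * (N * Q\<^sup>2)) * (4 * Q)"
  proof -
    have "0 \<le> (N * Q) * (N * Q\<^sup>2)"
      using \<open>N > 0\<close> \<open>1 \<le> 2 * Q\<close> by simp
    then have "(N * Q) * (N * Q\<^sup>2) * 1 \<le> (N * Q) * (N * Q\<^sup>2) * (4 * Q)"
      using \<open>1 \<le> 2 * Q\<close> by (intro mult_left_mono) auto
    then show ?thesis by simp
  qed
  also have "\<dots> = (2 * N * Q\<^sup>2)\<^sup>2"
    by (simp add: power2_eq_square mult_ac)
  finally show "B * sqrt A \<le> 2 * N * Q\<^sup>2"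
    by (rule power2_le_imp_le) (use \<open>N > 0\<close> in simp)
qed

lemma eigenvalue_bounds_from_estimates:
  fixes A N B Q P L m C W R \<epsilon> :: real and Z lam :: complex
  assumes "B > 0" and "\<epsilon> > 0" and "0 \<le> A" and "0 \<le> L" and "0 \<le> C" and "0 \<le> m"
    and energy: "A \<le> P" and neg_part: "P \<le> B\<^sup>2 * Q"
    and sup: "B\<^sup>2 \<le> sqrt A * sqrt N" and mass: "N \<le> 2 * B\<^sup>2"
    and small: "8 * Q\<^sup>2 * m < 1" and W: "\<epsilon> * N - \<epsilon> * B\<^sup>2 * m \<le> W"
    and Z: "cmod Z \<le> B * (sqrt A * sqrt L)" and R: "\<bar>R\<bar> \<le> 2 * C * P"
    and Im: "Im lam * W = Im Z" and Re: "Re lam * W = Re Z + R"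
  shows "\<bar>Re lam\<bar> \<le> 8 / \<epsilon> * Q\<^sup>2 * (3 * C + sqrt L)"
    and "\<bar>Im lam\<bar> \<le> 8 / \<epsilon> * sqrt L * Q\<^sup>2"
proof -
  note interp = sup_norm_interpolation[OF \<open>B > 0\<close> \<open>0 \<le> A\<close> order_trans[OF energy neg_part] sup mass]
  define K where "K = 3 / 4 * \<epsilon> * N"
  have "K > 0" using interp(1) \<open>\<epsilon> > 0\<close> by (simp add: K_def)
  have "0 \<le> 4 * (Q * m)" using interp(2) \<open>0 \<le> m\<close> by simp
  then have "4 * (Q * m) * 1 \<le> 4 * (Q * m) * (2 * Q)"
    by (rule mult_left_mono[OF interp(2)])
  then have "Q * m \<le> 1 / 4"
    using small by (simp add: power2_eq_square mult_ac)
  have "\<epsilon> * B\<^sup>2 * m \<le> \<epsilon> * (N * Q) * m"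
    using interp(3) \<open>\<epsilon> > 0\<close> \<open>0 \<le> m\<close> by (simp add: mult_right_mono)
  also have "\<dots> \<le> \<epsilon> * N * (1 / 4)"
    using \<open>Q * m \<le> 1 / 4\<close> \<open>\<epsilon> > 0\<close> interp(1) by (simp add: mult.assoc mult_left_mono)
  finally have "\<epsilon> * B\<^sup>2 * m \<le> \<epsilon> * N * (1 / 4)" .
  then have "K \<le> W"
    using W by (simp add: K_def)
  have "B\<^sup>2 * Q \<le> N * Q * Q"
    using interp(2) by (intro mult_right_mono[OF interp(3)]) simp
  with neg_part have P_le: "P \<le> N * Q\<^sup>2"
    by (simp add: power2_eq_square mult.assoc)
  have Z_le: "cmod Z \<le> 2 * N * Q\<^sup>2 * sqrt L"
    using Z mult_right_mono[OF interp(4) real_sqrt_ge_zero[OF \<open>0 \<le> L\<close>]] by (simp add: mult.assoc)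
  have nonneg: "0 \<le> 2 * N * Q\<^sup>2 * sqrt L" "0 \<le> 2 * C * (N * Q\<^sup>2)"
    using interp(1) \<open>0 \<le> L\<close> \<open>0 \<le> C\<close> by simp_all
  have "\<bar>Im lam\<bar> * K \<le> \<bar>Im lam\<bar> * W"
    using \<open>K \<le> W\<close> by (simp add: mult_left_mono)
  also have "\<dots> \<le> cmod Z"
    using Im \<open>K \<le> W\<close> \<open>K > 0\<close> abs_Im_le_cmod[of Z] by (simp add: abs_mult)
  also have "\<dots> \<le> 3 * (2 * N * Q\<^sup>2 * sqrt L)"
    using Z_le nonneg by linarith
  also have "\<dots> = (8 / \<epsilon> * sqrt L * Q\<^sup>2) * K"
    using \<open>\<epsilon> > 0\<close> by (simp add: K_def field_simps)
  finally show "\<bar>Im lam\<bar> \<le> 8 / \<epsilon> * sqrt L * Q\<^sup>2"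
    using \<open>K > 0\<close> by (rule mult_right_le_imp_le)
  have "\<bar>Re lam\<bar> * K \<le> \<bar>Re lam\<bar> * W"
    using \<open>K \<le> W\<close> by (simp add: mult_left_mono)
  also have "\<dots> \<le> cmod Z + \<bar>R\<bar>"
    using Re \<open>K \<le> W\<close> \<open>K > 0\<close> abs_Re_le_cmod[of Z] by (simp add: abs_mult)
  also have "\<dots> \<le> 2 * N * Q\<^sup>2 * sqrt L + 2 * C * (N * Q\<^sup>2)"
    using Z_le R mult_left_mono[OF P_le, of "2 * C"] \<open>0 \<le> C\<close> by simp
  also have "\<dots> \<le> 3 * (2 * N * Q\<^sup>2 * sqrt L) + 9 * (2 * C * (N * Q\<^sup>2))"
    using nonneg by linarith
  also have "\<dots> = (8 / \<epsilon> * Q\<^sup>2 * (3 * C + sqrt L)) * K"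
    using \<open>\<epsilon> > 0\<close> by (simp add: K_def field_simps)
  finally show "\<bar>Re lam\<bar> \<le> 8 / \<epsilon> * Q\<^sup>2 * (3 * C + sqrt L)"
    using \<open>K > 0\<close> by (rule mult_right_le_imp_le)
qed

locale nonreal_eigenfunction =
  fixes q w w' :: "real \<Rightarrow> real" and lam :: complex and y y' :: "real \<Rightarrow> complex"
  assumes q_integrable: "q absolutely_integrable_on {-1..1}"
    and w_abs_continuous: "abs_continuous_on (-1) 1 w"
    and w_deriv: "AE x in lebesgue. x \<in> {-1..1} \<longrightarrow> (w has_real_derivative w' x) (at x)"
    and w'_measurable: "w' \<in> borel_measurable (lebesgue_on {-1..1})"
    and w'_square_integrable: "(\<lambda>x. (w' x)^2) integrable_on {-1..1}"
    and y_abs_continuous: "abs_continuous_on (-1) 1 y"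
    and y'_abs_continuous: "abs_continuous_on (-1) 1 y'"
    and y_deriv: "\<And>x. x \<in> {-1..1} \<Longrightarrow> (y has_vector_derivative y' x) (at x within {-1..1})"
    and eigen_equation: "AE x in lebesgue. x \<in> {-1..1} \<longrightarrow> (\<exists>d. (y' has_vector_derivative d) (at x) \<and>
          - d + complex_of_real (q x) * y x = lam * complex_of_real (w x) * y x)"
    and y_boundary: "y (-1) = 0" "y 1 = 0"
    and y_nonzero: "\<exists>x\<in>{-1..1}. y x \<noteq> 0"
    and nonreal: "Im lam \<noteq> 0"
begin

definition energy where "energy = integral {-1..1} (\<lambda>x. cmod (y' x)^2)"
definition mass where "mass = integral {-1..1} (\<lambda>x. cmod (y x)^2)"
definition ymax where "ymax = Sup ((\<lambda>x. cmod (y x)) ` {-1..1})"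

lemma continuous_on: "continuous_on {-1..1} y" "continuous_on {-1..1} y'" "continuous_on {-1..1} w"
  using y_abs_continuous y'_abs_continuous w_abs_continuous
  by (simp_all add: abs_continuous_on_imp_continuous_on)

lemma w'_integrable: "w' absolutely_integrable_on {-1..1}"
proof (rule measurable_bounded_by_integrable_imp_absolutely_integrable[OF w'_measurable])
  show "(\<lambda>x. 1 + (w' x)^2) integrable_on {-1..1}"
    using w'_square_integrable by (intro integrable_add integrable_const_ivl)
  show "norm (w' x) \<le> 1 + (w' x)^2" for x
  proof -
    have "0 \<le> (\<bar>w' x\<bar> - 1)^2" by simp
    then show ?thesis by (simp add: power2_eq_square algebra_simps)
  qed
qed simp

lemma neg_part_q_integrable: "(\<lambda>x. max 0 (- q x)) absolutely_integrable_on {-1..1}"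
  using absolutely_integrable_scaleR_left[OF q_integrable, of "-1"]
  by (intro absolutely_integrable_max_1) simp_all

lemma ymax: "cmod (y x) \<le> ymax" if "x \<in> {-1..1}" for x
proof -
  have "bounded ((\<lambda>x. cmod (y x)) ` {-1..1})"
    using continuous_on(1) by (intro compact_imp_bounded compact_continuous_image continuous_intros) auto
  then show ?thesis
    unfolding ymax_def using that by (intro cSup_upper bounded_imp_bdd_above) auto
qed

lemma ymax_pos: "ymax > 0"
proof -
  obtain x where "x \<in> {-1..1}" "y x \<noteq> 0" using y_nonzero by blast
  then have "0 < cmod (y x)" by simp
  with ymax[OF \<open>x \<in> {-1..1}\<close>] show ?thesis by linarith
qed

lemma integrable_mult_continuous:
  fixes f g :: "real \<Rightarrow> real"
  assumes "continuous_on {-1..1} f" and "g absolutely_integrable_on {-1..1}"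
  shows "(\<lambda>x. g x * f x) integrable_on {-1..1}"
  using absolutely_integrable_continuous_scaleR[OF assms] set_lebesgue_integral_eq_integral(1) by force

lemma w_integrable: "w absolutely_integrable_on {-1..1}"
  using continuous_on(3) by (rule absolutely_integrable_continuous_real)

lemma weighted_identity:
  assumes "abs_continuous_on (-1) 1 g"
    and "AE x in lebesgue. x \<in> {-1..1} \<longrightarrow> (g has_real_derivative g' x) (at x)"
    and "g' absolutely_integrable_on {-1..1}"
  shows "integral {-1..1} (\<lambda>x. g' x *\<^sub>R (y' x * cnj (y x)))
      + of_real (integral {-1..1} (\<lambda>x. g x * cmod (y' x)^2) + integral {-1..1} (\<lambda>x. q x * (g x * cmod (y x)^2)))
      = lam * of_real (integral {-1..1} (\<lambda>x. w x * (g x * cmod (y x)^2)))"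
  using eigenfunction_weighted_identity[OF _ q_integrable w_integrable y_abs_continuous y'_abs_continuous
      y_deriv eigen_equation y_boundary assms] by simp

lemma energy_eq: "energy = - integral {-1..1} (\<lambda>x. q x * cmod (y x)^2)"
  and weight_orthogonal: "integral {-1..1} (\<lambda>x. w x * cmod (y x)^2) = 0"
proof -
  have eq: "of_real (energy + integral {-1..1} (\<lambda>x. q x * cmod (y x)^2))
      = lam * of_real (integral {-1..1} (\<lambda>x. w x * cmod (y x)^2))"
    using weighted_identity[of "\<lambda>_. 1" "\<lambda>_. 0"] by (simp add: abs_continuous_on_const energy_def)
  have "Im lam * integral {-1..1} (\<lambda>x. w x * cmod (y x)^2) = 0"
    and "energy + integral {-1..1} (\<lambda>x. q x * cmod (y x)^2) = Re lam * integral {-1..1} (\<lambda>x. w x * cmod (y x)^2)"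
    using arg_cong[OF eq, of Im] arg_cong[OF eq, of Re] by simp_all
  with nonreal show "integral {-1..1} (\<lambda>x. w x * cmod (y x)^2) = 0"
    and "energy = - integral {-1..1} (\<lambda>x. q x * cmod (y x)^2)"
    by auto
qed

lemma continuous_on_square_norm:
  "continuous_on {-1..1} (\<lambda>x. cmod (y x)^2)" "continuous_on {-1..1} (\<lambda>x. cmod (y' x)^2)"
  using continuous_on by (auto intro!: continuous_intros)

lemma energy_le_neg_part: "energy \<le> integral {-1..1} (\<lambda>x. max 0 (- q x) * cmod (y x)^2)"
proof -
  have "integral {-1..1} (\<lambda>x. - (q x * cmod (y x)^2)) \<le> integral {-1..1} (\<lambda>x. max 0 (- q x) * cmod (y x)^2)"
  proof (rule integral_le)
    show "- (q x * cmod (y x)^2) \<le> max 0 (- q x) * cmod (y x)^2" for x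
      using mult_right_mono[of "- q x" "max 0 (- q x)" "cmod (y x)^2"] by simp
  qed (use integrable_mult_continuous[OF continuous_on_square_norm(1)] q_integrable
        neg_part_q_integrable in \<open>auto intro: integrable_neg\<close>)
  then show ?thesis by (simp add: energy_eq)
qed

lemma neg_part_le: "integral {-1..1} (\<lambda>x. max 0 (- q x) * cmod (y x)^2)
    \<le> ymax^2 * integral {-1..1} (\<lambda>x. max 0 (- q x))"
proof -
  have "integral {-1..1} (\<lambda>x. max 0 (- q x) * cmod (y x)^2) \<le> integral {-1..1} (\<lambda>x. max 0 (- q x) * ymax^2)"
    using integrable_mult_continuous[OF continuous_on_square_norm(1) neg_part_q_integrable]
      integrable_mult_continuous[OF continuous_on_const neg_part_q_integrable] ymax
    by (intro integral_le) (auto intro!: mult_left_mono power_mono)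
  then show ?thesis by (simp add: mult.commute)
qed

lemma ymax_square_le: "ymax^2 \<le> sqrt energy * sqrt mass"
proof -
  have "integral {-1..1} (\<lambda>x. cmod (y' x) * cmod (y x)) \<le> sqrt energy * sqrt mass"
    unfolding energy_def mass_def
    by (intro Cauchy_Schwarz_ineq_integral integrable_continuous_interval continuous_intros continuous_on)
  then have "cmod (y x) \<le> sqrt (sqrt energy * sqrt mass)" if "x \<in> {-1..1}" for x
    using cmod_square_le_integral_boundary_zero[OF y_deriv continuous_on(2) y_boundary that]
    by (metis order_trans real_le_rsqrt)
  then have "ymax \<le> sqrt (sqrt energy * sqrt mass)"
    unfolding ymax_def by (intro cSup_least) auto
  then have "ymax^2 \<le> (sqrt (sqrt energy * sqrt mass))^2"
    using ymax_pos by (intro power_mono) auto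
  also have "\<dots> = sqrt energy * sqrt mass"
    using \<open>ymax \<le> sqrt (sqrt energy * sqrt mass)\<close> ymax_pos real_sqrt_gt_0_iff[of "sqrt energy * sqrt mass"]
    by (intro real_sqrt_pow2) linarith
  finally show ?thesis .
qed

lemma mass_le: "mass \<le> 2 * ymax^2"
proof -
  have "mass \<le> integral {-1..1} (\<lambda>x::real. ymax^2)"
    unfolding mass_def
  proof (rule integral_le)
    show "cmod (y x)^2 \<le> ymax^2" if "x \<in> {-1..1}" for x
      using ymax[OF that] by (simp add: power_mono)
  qed (use continuous_on_square_norm in \<open>auto intro: integrable_continuous_interval\<close>)
  then show ?thesis by simp
qed

definition weight_mass where "weight_mass = integral {-1..1} (\<lambda>x. w x * (w x * cmod (y x)^2))"
definition cross_term where "cross_term = integral {-1..1} (\<lambda>x. w' x *\<^sub>R (y' x * cnj (y x)))"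
definition weight_energy where "weight_energy =
  integral {-1..1} (\<lambda>x. w x * cmod (y' x)^2) + integral {-1..1} (\<lambda>x. q x * (w x * cmod (y x)^2))"

lemma weight_identity_Im: "Im lam * weight_mass = Im cross_term"
  and weight_identity_Re: "Re lam * weight_mass = Re cross_term + weight_energy"
proof -
  have eq: "cross_term + of_real weight_energy = lam * of_real weight_mass"
    using weighted_identity[OF w_abs_continuous w_deriv w'_integrable]
    by (simp add: cross_term_def weight_energy_def weight_mass_def)
  show "Im lam * weight_mass = Im cross_term" "Re lam * weight_mass = Re cross_term + weight_energy"
    using arg_cong[OF eq, of Im] arg_cong[OF eq, of Re] by simp_all
qed

lemma cross_term_le: "cmod cross_term \<le> ymax * (sqrt energy * sqrt (integral {-1..1} (\<lambda>x. (w' x)^2)))"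
proof -
  have "(\<lambda>x. \<bar>w' x\<bar> * cmod (y' x)) integrable_on {-1..1}"
    using absolutely_integrable_norm[OF w'_integrable] continuous_on
    by (intro integrable_mult_continuous continuous_intros) (simp_all add: o_def)
  moreover have "(\<lambda>x. \<bar>w' x\<bar> * (cmod (y' x) * cmod (y x))) integrable_on {-1..1}"
    using absolutely_integrable_norm[OF w'_integrable] continuous_on
    by (intro integrable_mult_continuous continuous_intros) (simp_all add: o_def)
  moreover have pointwise: "\<bar>w' x\<bar> * (cmod (y' x) * cmod (y x)) \<le> ymax * (\<bar>w' x\<bar> * cmod (y' x))"
    if "x \<in> {-1..1}" for x
    using mult_left_mono[OF ymax[OF that], of "\<bar>w' x\<bar> * cmod (y' x)"] by (simp add: mult_ac)
  ultimately have "cmod cross_term \<le> integral {-1..1} (\<lambda>x. ymax * (\<bar>w' x\<bar> * cmod (y' x)))"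
    unfolding cross_term_def using ymax ymax_pos
    by (intro integral_norm_bound_integral integrable_on_mult_right absolutely_integrable_continuous_scaleR
          [THEN set_lebesgue_integral_eq_integral(1)] w'_integrable continuous_intros continuous_on)
      (auto simp: norm_mult intro: pointwise)
  also have "\<dots> = ymax * integral {-1..1} (\<lambda>x. \<bar>w' x\<bar> * cmod (y' x))"
    by simp
  also have "\<dots> \<le> ymax * (sqrt energy * sqrt (integral {-1..1} (\<lambda>x. (w' x)^2)))"
  proof (rule mult_left_mono)
    have "integral {-1..1} (\<lambda>x. \<bar>w' x\<bar> * cmod (y' x))
        \<le> sqrt (integral {-1..1} (\<lambda>x. \<bar>w' x\<bar>^2)) * sqrt energy"
      unfolding energy_def using \<open>(\<lambda>x. \<bar>w' x\<bar> * cmod (y' x)) integrable_on {-1..1}\<close>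
      by (intro Cauchy_Schwarz_ineq_integral)
        (simp_all add: w'_square_integrable integrable_continuous_interval continuous_on_square_norm)
    then show "integral {-1..1} (\<lambda>x. \<bar>w' x\<bar> * cmod (y' x))
        \<le> sqrt energy * sqrt (integral {-1..1} (\<lambda>x. (w' x)^2))"
      by (simp add: mult.commute)
  qed (use ymax_pos in simp)
  finally show ?thesis .
qed

definition wmax where "wmax = Sup ((\<lambda>x. \<bar>w x\<bar>) ` {-1..1})"

lemma wmax: "\<bar>w x\<bar> \<le> wmax" if "x \<in> {-1..1}" for x
proof -
  have "bounded ((\<lambda>x. \<bar>w x\<bar>) ` {-1..1})"
    using continuous_on(3) by (intro compact_imp_bounded compact_continuous_image continuous_intros) auto
  then show ?thesis
    unfolding wmax_def using that by (intro cSup_upper bounded_imp_bdd_above) auto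
qed

lemma weight_energy_le:
  "\<bar>weight_energy\<bar> \<le> 2 * wmax * integral {-1..1} (\<lambda>x. max 0 (- q x) * cmod (y x)^2)"
proof -
  have int: "(\<lambda>x. w x * cmod (y' x)^2) integrable_on {-1..1}"
    "(\<lambda>x. cmod (y' x)^2) integrable_on {-1..1}"
    "(\<lambda>x. q x * (w x * cmod (y x)^2)) integrable_on {-1..1}"
    "(\<lambda>x. q x * cmod (y x)^2) integrable_on {-1..1}"
    "(\<lambda>x. max 0 (- q x) * cmod (y x)^2) integrable_on {-1..1}"
    using continuous_on
    by (auto intro!: integrable_continuous_interval integrable_mult_continuous[OF _ q_integrable]
        integrable_mult_continuous[OF _ neg_part_q_integrable] continuous_intros)
  have "\<bar>weight_energy\<bar> = \<bar>integral {-1..1} (\<lambda>x. w x * cmod (y' x)^2 + q x * (w x * cmod (y x)^2))\<bar>"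
    using int by (simp add: weight_energy_def integral_add)
  also have "\<dots> \<le> integral {-1..1} (\<lambda>x. wmax * (cmod (y' x)^2 + q x * cmod (y x)^2
      + 2 * (max 0 (- q x) * cmod (y x)^2)))"
  proof -
    have "norm (integral {-1..1} (\<lambda>x. w x * cmod (y' x)^2 + q x * (w x * cmod (y x)^2)))
        \<le> integral {-1..1} (\<lambda>x. wmax * (cmod (y' x)^2 + q x * cmod (y x)^2
          + 2 * (max 0 (- q x) * cmod (y x)^2)))"
    proof (rule integral_norm_bound_integral)
      fix x :: real assume "x \<in> {-1..1}"
      have "\<bar>w x * cmod (y' x)^2 + q x * (w x * cmod (y x)^2)\<bar>
          \<le> \<bar>w x\<bar> * (cmod (y' x)^2 + \<bar>q x\<bar> * cmod (y x)^2)"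
        by (rule order_trans[OF abs_triangle_ineq]) (simp add: abs_mult distrib_left mult_ac)
      also have "\<dots> \<le> wmax * (cmod (y' x)^2 + \<bar>q x\<bar> * cmod (y x)^2)"
        using wmax[OF \<open>x \<in> {-1..1}\<close>] by (intro mult_right_mono) auto
      also have "\<bar>q x\<bar> = q x + 2 * max 0 (- q x)"
        by simp
      finally show "norm (w x * cmod (y' x)^2 + q x * (w x * cmod (y x)^2))
          \<le> wmax * (cmod (y' x)^2 + q x * cmod (y x)^2 + 2 * (max 0 (- q x) * cmod (y x)^2))"
        by (simp add: algebra_simps)
    qed (use int in \<open>auto intro!: integrable_add integrable_on_mult_right\<close>)
    then show ?thesis by simp
  qed
  also have "\<dots> = wmax * (energy + integral {-1..1} (\<lambda>x. q x * cmod (y x)^2)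
      + 2 * integral {-1..1} (\<lambda>x. max 0 (- q x) * cmod (y x)^2))"
    using int by (simp add: energy_def integral_add integrable_add integrable_on_mult_right)
  also have "\<dots> = 2 * wmax * integral {-1..1} (\<lambda>x. max 0 (- q x) * cmod (y x)^2)"
    by (simp add: energy_eq)
  finally show ?thesis .
qed

lemma weight_mass_ge:
  assumes "\<epsilon> > 0"
  shows "\<epsilon> * mass - \<epsilon> * ymax^2 * measure lebesgue {x \<in> {-1..1}. (w x)^2 < \<epsilon>} \<le> weight_mass"
proof -
  have "(\<lambda>x. w x * (w x * cmod (y x)^2)) = (\<lambda>x. cmod (y x)^2 * (w x)^2)"
    by (simp add: fun_eq_iff power2_eq_square)
  moreover have "\<epsilon> * mass - \<epsilon> * ymax^2 * measure lebesgue {x \<in> {-1..1}. (w x)^2 < \<epsilon>}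
      \<le> integral {-1..1} (\<lambda>x. cmod (y x)^2 * (w x)^2)"
    unfolding mass_def
  proof (rule integral_weight_square_lower_bound)
    show "w \<in> borel_measurable (lebesgue_on {-1..1})"
      using continuous_on(3) by (rule continuous_imp_measurable_on_sets_lebesgue) simp
    show "0 \<le> cmod (y x)^2 \<and> cmod (y x)^2 \<le> ymax^2" if "x \<in> {-1..1}" for x
      using ymax[OF that] by (simp add: power_mono)
  qed (use assms continuous_on in \<open>auto intro!: integrable_continuous_interval continuous_intros\<close>)
  ultimately show ?thesis by (simp add: weight_mass_def)
qed

theorem eigenvalue_bounds:
  assumes "\<epsilon> > 0"
    and "8 * (integral {-1..1} (\<lambda>x. max 0 (- q x)))^2 * measure lebesgue {x \<in> {-1..1}. (w x)^2 < \<epsilon>} < 1"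
  shows "\<bar>Re lam\<bar> \<le> 8 / \<epsilon> * (integral {-1..1} (\<lambda>x. max 0 (- q x)))^2
           * (3 * wmax + sqrt (integral {-1..1} (\<lambda>x. (w' x)^2)))"
    and "\<bar>Im lam\<bar> \<le> 8 / \<epsilon> * sqrt (integral {-1..1} (\<lambda>x. (w' x)^2))
           * (integral {-1..1} (\<lambda>x. max 0 (- q x)))^2"
proof -
  have "0 \<le> energy"
    unfolding energy_def by (intro integral_nonneg integrable_continuous_interval continuous_on_square_norm) simp
  moreover have "0 \<le> integral {-1..1} (\<lambda>x. (w' x)^2)"
    using w'_square_integrable by (rule integral_nonneg) simp
  moreover have "0 \<le> wmax"
    using wmax[of 0] by simp
  ultimately show "\<bar>Re lam\<bar> \<le> 8 / \<epsilon> * (integral {-1..1} (\<lambda>x. max 0 (- q x)))^2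
           * (3 * wmax + sqrt (integral {-1..1} (\<lambda>x. (w' x)^2)))"
    and "\<bar>Im lam\<bar> \<le> 8 / \<epsilon> * sqrt (integral {-1..1} (\<lambda>x. (w' x)^2))
           * (integral {-1..1} (\<lambda>x. max 0 (- q x)))^2"
    using eigenvalue_bounds_from_estimates[OF ymax_pos assms(1) _ _ _ measure_nonneg energy_le_neg_part
        neg_part_le ymax_square_le mass_le assms(2) weight_mass_ge[OF assms(1)] cross_term_le
        weight_energy_le weight_identity_Im weight_identity_Re]
    by simp_all
qed

end

theorem theorem1p3:
  fixes q w wd :: "real \<Rightarrow> real" and \<epsilon>2 :: real and lam :: complex
  assumes q_int: "set_integrable lebesgue {-1..1} q"
    and w_int: "set_integrable lebesgue {-1..1} w"
    and w_nonzero: "AE x in lebesgue. x \<in> {-1..1} \<longrightarrow> w x \<noteq> 0"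
    and w_pos: "emeasure lebesgue {x \<in> {-1..1}. w x > 0} > 0"
    and w_neg: "emeasure lebesgue {x \<in> {-1..1}. w x < 0} > 0"
    and w_ac: "abs_continuous_on (-1) 1 w"
    and wd_deriv: "AE x in lebesgue. x \<in> {-1..1} \<longrightarrow> (w has_real_derivative wd x) (at x)"
    and wd_meas: "set_borel_measurable lebesgue {-1..1} wd"
    and wd_L2: "set_integrable lebesgue {-1..1} (\<lambda>x. (wd x)^2)"
    and eps_pos: "\<epsilon>2 > 0"
    and eps_small: "8 * (LINT x:{-1..1}|lebesgue. max 0 (- q x))^2
                      * measure lebesgue {x \<in> {-1..1}. (w x)^2 < \<epsilon>2} < 1"
    and nonreal: "Im lam \<noteq> 0"
    and eig: "is_eigenvalue q w lam"
  shows "\<bar>Re lam\<bar> \<le> 8 / \<epsilon>2 * (LINT x:{-1..1}|lebesgue. max 0 (- q x))^2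
                     * (3 * Sup ((\<lambda>x. \<bar>w x\<bar>) ` {-1..1})
                        + sqrt (LINT x:{-1..1}|lebesgue. (wd x)^2))
       \<and> \<bar>Im lam\<bar> \<le> 8 / \<epsilon>2 * sqrt (LINT x:{-1..1}|lebesgue. (wd x)^2)
                     * (LINT x:{-1..1}|lebesgue. max 0 (- q x))^2"
proof -
  obtain y y' :: "real \<Rightarrow> complex" where
    "\<exists>x\<in>{-1..1}. y x \<noteq> 0" and "abs_continuous_on (-1) 1 y" and "abs_continuous_on (-1) 1 y'"
    and "\<forall>x\<in>{-1..1}. (y has_vector_derivative y' x) (at x within {-1..1})"
    and "AE x in lebesgue. x \<in> {-1..1} \<longrightarrow> (\<exists>d. (y' has_vector_derivative d) (at x) \<and>
           - d + complex_of_real (q x) * y x = lam * complex_of_real (w x) * y x)"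
    and "y (-1) = 0" and "y 1 = 0"
    using eig unfolding is_eigenvalue_def by blast
  moreover have "wd \<in> borel_measurable (lebesgue_on {-1..1})"
    using wd_meas by (simp add: set_borel_measurable_def borel_measurable_restrict_space_iff)
  ultimately interpret nonreal_eigenfunction q w wd lam y y'
    using q_int w_ac wd_deriv set_lebesgue_integral_eq_integral(1)[OF wd_L2] nonreal
    by unfold_locales auto
  have "(LINT x:{-1..1}|lebesgue. max 0 (- q x)) = integral {-1..1} (\<lambda>x. max 0 (- q x))"
    and "(LINT x:{-1..1}|lebesgue. (wd x)^2) = integral {-1..1} (\<lambda>x. (wd x)^2)"
    using set_lebesgue_integral_eq_integral(2) neg_part_q_integrable wd_L2 by blast+
  then show ?thesis
    using eigenvalue_bounds[OF eps_pos] eps_small by (simp add: wmax_def)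
qed

end
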